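(* For every $h\geq 1$, the linear polyacene $L_h$ satisfies $$W_e(L_h)=\tfrac16 h(50h^2+69h+43)\qquad\text{and}\qquad WW_e(L_h)=\tfrac16 h(25h^3+71h^2+77h+79).$$
   Context: The linear polyacene $L_h$ is the benzenoid system (subgraph of the hexagonal lattice) consisting of $h$ hexagons connected linearly, each consecutive pair of hexagons sharing one edge, with all shared edges parallel (so $L_h$ has $4h+2$ vertices and $5h+1$ edges; $L_1$ is the 6-cycle). The distance $d(e,f)$ between edges is the distance between $e$ and $f$ as vertices of the line graph. The edge-Wiener index is $W_e(G)=\sum_{\{e,f\}\subseteq E(G)}d(e,f)$ and the edge-hyper-Wiener index is $WW_e(G)=\frac12\sum_{\{e,f\}\subseteq E(G)}d(e,f)+\frac12\sum_{\{e,f\}\subseteq E(G)}d(e,f)^2$, sums over unordered pairs of distinct edges. *)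

theory Defs
  imports Complex_Main
begin

text \<open>Graphs are given by their edge sets: each edge is a 2-element set of vertices.\<close>

definition ladj :: "'a set set \<Rightarrow> ('a set \<times> 'a set) set" where
  "ladj E = {(e, f). e \<in> E \<and> f \<in> E \<and> e \<noteq> f \<and> e \<inter> f \<noteq> {}}"

definition edist :: "'a set set \<Rightarrow> 'a set \<Rightarrow> 'a set \<Rightarrow> nat" where
  "edist E e f = (LEAST n. (e, f) \<in> ladj E ^^ n)"

text \<open>Sums over unordered pairs of distinct edges, written as half the sum over ordered pairs.\<close>
definition edge_wiener :: "'a set set \<Rightarrow> real" where
  "edge_wiener E = (\<Sum>(e, f) \<in> {(e, f). e \<in> E \<and> f \<in> E \<and> e \<noteq> f}. real (edist E e f)) / 2"

definition edge_hyper_wiener :: "'a set set \<Rightarrow> real" where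
  "edge_hyper_wiener E =
     (1/2) * ((\<Sum>(e, f) \<in> {(e, f). e \<in> E \<and> f \<in> E \<and> e \<noteq> f}. real (edist E e f)) / 2)
   + (1/2) * ((\<Sum>(e, f) \<in> {(e, f). e \<in> E \<and> f \<in> E \<and> e \<noteq> f}. real (edist E e f) ^ 2) / 2)"

text \<open>Linear polyacene L_h: vertices (True, i) (top row) and (False, i) (bottom row),
  0 \<le> i \<le> 2h; top and bottom paths plus the h+1 parallel rungs at even positions.
  Hexagon k (k < h) is (T,2k),(T,2k+1),(T,2k+2),(F,2k+2),(F,2k+1),(F,2k).\<close>
definition polyacene :: "nat \<Rightarrow> (bool \<times> nat) set set" where
  "polyacene h =
     {{(True, i), (True, Suc i)} | i. i < 2 * h}
   \<union> {{(False, i), (False, Suc i)} | i. i < 2 * h}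
   \<union> {{(True, 2 * k), (False, 2 * k)} | k. k \<le> h}"

end

theory Submission
  imports Defs
begin

text \<open>
  The distance in the line graph between distinct edges e and f is one more than the least
  distance between an end vertex of e and an end vertex of f, and in L_h the vertex distances
  have an explicit closed form. L_(h+1) arises from L_h by adding five edges, two on each row
  and one rung; the distance sums between these five edges and any earlier group of five depend
  only on their offset, which turns the sums of d and d^2 over L_h into recurrences in h that
  are solved by induction.
\<close>

definition line_dist :: "('a \<Rightarrow> 'a \<Rightarrow> nat) \<Rightarrow> 'a set \<Rightarrow> 'a set \<Rightarrow> nat" where
  "line_dist d e f = (if e = f then 0 else Suc (Min (case_prod d ` (e \<times> f))))"

lemma line_dist_refl [simp]: "line_dist d e e = 0"
  by (simp add: line_dist_def)

lemma line_dist_sym: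
  assumes "\<And>u v. d u v = d v u"
  shows "line_dist d e f = line_dist d f e"
proof -
  have "case_prod d ` (e \<times> f) = case_prod d ` (f \<times> e)"
    using assms by (auto simp: image_iff) (metis assms)+
  then show ?thesis by (simp add: line_dist_def eq_commute)
qed

lemma line_dist_doubleton:
  "{a, b} \<noteq> {c, d'} \<Longrightarrow>
   line_dist d {a, b} {c, d'} = Suc (min (min (d a c) (d a d')) (min (d b c) (d b d')))"
proof -
  assume "{a, b} \<noteq> {c, d'}"
  moreover have "case_prod d ` ({a, b} \<times> {c, d'}) = {d a c, d a d', d b c, d b d'}" by auto
  ultimately show ?thesis by (simp add: line_dist_def min.assoc)
qed

locale graph_metric =
  fixes E :: "'a set set" and d :: "'a \<Rightarrow> 'a \<Rightarrow> nat"
  assumes edge_doubleton: "e \<in> E \<Longrightarrow> \<exists>a b. a \<noteq> b \<and> e = {a, b}"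
    and dist_eq_0_iff: "d u v = 0 \<longleftrightarrow> u = v"
    and dist_edge_le: "{v, w} \<in> E \<Longrightarrow> d u w \<le> Suc (d u v)"
    and dist_descent: "u \<in> \<Union>E \<Longrightarrow> v \<in> \<Union>E \<Longrightarrow> u \<noteq> v \<Longrightarrow> \<exists>w. {v, w} \<in> E \<and> Suc (d u w) = d u v"
begin

lemma finite_edge: "e \<in> E \<Longrightarrow> finite e"
  using edge_doubleton by blast

lemma edge_eq_doubleton: "e \<in> E \<Longrightarrow> a \<in> e \<Longrightarrow> b \<in> e \<Longrightarrow> a \<noteq> b \<Longrightarrow> e = {a, b}"
  using edge_doubleton by blast

lemma line_dist_le:
  "e \<in> E \<Longrightarrow> f \<in> E \<Longrightarrow> u \<in> e \<Longrightarrow> v \<in> f \<Longrightarrow> e \<noteq> f \<Longrightarrow> line_dist d e f \<le> Suc (d u v)"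
  unfolding line_dist_def by (auto intro!: Min_le simp: finite_edge)

lemma line_dist_witness:
  assumes "e \<in> E" "f \<in> E" "e \<noteq> f"
  obtains u v where "u \<in> e" "v \<in> f" "line_dist d e f = Suc (d u v)"
proof -
  let ?D = "case_prod d ` (e \<times> f)"
  have "e \<noteq> {}" "f \<noteq> {}" using assms(1,2) edge_doubleton by blast+
  then have "Min ?D \<in> ?D" using assms by (intro Min_in) (auto simp: finite_edge)
  then obtain u v where "u \<in> e" "v \<in> f" "Min ?D = d u v" by auto
  with that assms(3) show ?thesis by (simp add: line_dist_def)
qed

lemma line_dist_ladj_le:
  assumes gf: "(g, f) \<in> ladj E" and e: "e \<in> E"
  shows "line_dist d e f \<le> Suc (line_dist d e g)"
proof -
  from gf have g: "g \<in> E" and f: "f \<in> E" and "g \<inter> f \<noteq> {}"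
    by (auto simp: ladj_def)
  then obtain w where wg: "w \<in> g" and wf: "w \<in> f" by auto
  consider "e = f" | "e = g" "e \<noteq> f" | "e \<noteq> g" "e \<noteq> f" by blast
  then show ?thesis
  proof cases
    case 1
    then show ?thesis by simp
  next
    case 2
    have "line_dist d e f \<le> Suc (d w w)" using line_dist_le[OF e f _ wf 2(2)] wg 2(1) by blast
    moreover have "d w w = 0" using dist_eq_0_iff by blast
    ultimately show ?thesis by simp
  next
    case 3
    obtain u v where u: "u \<in> e" and v: "v \<in> g" and eg: "line_dist d e g = Suc (d u v)"
      using line_dist_witness[OF e g 3(1)] by metis
    have "d u w \<le> Suc (d u v)"
      using edge_eq_doubleton[OF g v wg] g dist_edge_le[of v w u] by (cases "v = w") auto
    then show ?thesis using line_dist_le[OF e f u wf 3(2)] eg by simp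
  qed
qed

lemma line_dist_descent:
  assumes e: "e \<in> E" and f: "f \<in> E" and n: "line_dist d e f = Suc n"
  shows "\<exists>g\<in>E. (g, f) \<in> ladj E \<and> line_dist d e g = n"
proof -
  have "e \<noteq> f" using n by auto
  then obtain u v where u: "u \<in> e" and v: "v \<in> f" and ef: "line_dist d e f = Suc (d u v)"
    using line_dist_witness[OF e f] by metis
  have uv: "d u v = n" using n ef by simp
  show ?thesis
  proof (cases "u = v")
    case True
    then have "(e, f) \<in> ladj E" using u v e f \<open>e \<noteq> f\<close> by (auto simp: ladj_def)
    then show ?thesis using e uv True dist_eq_0_iff by auto
  next
    case False
    obtain w where w: "{v, w} \<in> E" and sw: "Suc (d u w) = d u v"
      using dist_descent[OF _ _ False] u v e f by blast
    have "w \<notin> f"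
    proof
      assume "w \<in> f"
      then have "Suc (d u v) \<le> Suc (d u w)" using line_dist_le[OF e f u] ef \<open>e \<noteq> f\<close> by metis
      then show False using sw by simp
    qed
    then have gf: "({v, w}, f) \<in> ladj E" using w f v by (auto simp: ladj_def)
    have "v \<notin> e"
    proof
      assume "v \<in> e"
      then have "Suc (d u v) \<le> Suc (d v v)" using line_dist_le[OF e f _ v] ef \<open>e \<noteq> f\<close> by metis
      moreover have "d v v = 0" using dist_eq_0_iff by blast
      ultimately show False using sw by simp
    qed
    then have "line_dist d e {v, w} \<le> n"
      using line_dist_le[OF e w u, of w] sw uv by auto
    moreover have "line_dist d e f \<le> Suc (line_dist d e {v, w})"
      using line_dist_ladj_le[OF gf e] .
    ultimately have "line_dist d e {v, w} = n" using n by simp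
    then show ?thesis using w gf by blast
  qed
qed

lemma line_dist_le_relpow: "(e, f) \<in> ladj E ^^ n \<Longrightarrow> e \<in> E \<Longrightarrow> line_dist d e f \<le> n"
proof (induction n arbitrary: f)
  case (Suc n)
  then obtain g where "(e, g) \<in> ladj E ^^ n" and gf: "(g, f) \<in> ladj E" by auto
  then have "line_dist d e g \<le> n" using Suc by blast
  moreover have "line_dist d e f \<le> Suc (line_dist d e g)" using line_dist_ladj_le[OF gf] Suc by blast
  ultimately show ?case by simp
qed simp

lemma relpow_line_dist: "e \<in> E \<Longrightarrow> f \<in> E \<Longrightarrow> (e, f) \<in> ladj E ^^ line_dist d e f"
proof (induction "line_dist d e f" arbitrary: f)
  case 0
  then show ?case by (simp add: line_dist_def split: if_splits)
next
  case (Suc n)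
  then obtain g where "g \<in> E" "(g, f) \<in> ladj E" "line_dist d e g = n"
    using line_dist_descent by metis
  with Suc show ?case by (metis relpow_Suc_I)
qed

theorem edist_eq_line_dist: "e \<in> E \<Longrightarrow> f \<in> E \<Longrightarrow> edist E e f = line_dist d e f"
  unfolding edist_def
  by (rule Least_equality) (auto intro: relpow_line_dist line_dist_le_relpow)

lemma sum_offdiag_edist:
  assumes "finite E" "F 0 = 0"
  shows "(\<Sum>(e, f) \<in> {(e, f). e \<in> E \<and> f \<in> E \<and> e \<noteq> f}. F (edist E e f))
       = (\<Sum>e\<in>E. \<Sum>f\<in>E. F (line_dist d e f))"
proof -
  have "(\<Sum>(e, f) \<in> {(e, f). e \<in> E \<and> f \<in> E \<and> e \<noteq> f}. F (edist E e f))
      = (\<Sum>(e, f) \<in> {(e, f). e \<in> E \<and> f \<in> E \<and> e \<noteq> f}. F (line_dist d e f))"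
    by (rule sum.cong) (auto simp: edist_eq_line_dist)
  also have "\<dots> = (\<Sum>(e, f) \<in> E \<times> E. F (line_dist d e f))"
    using assms by (intro sum.mono_neutral_left) auto
  finally show ?thesis by (simp add: sum.cartesian_product)
qed

end

text \<open>
  Changing rows requires a rung, and rungs sit at the even columns. Between two distinct
  columns there is always an even one, so one extra step suffices; from an odd column
  back to the same column the detour to the nearest rung costs two more.
\<close>
fun acene_vdist :: "bool \<times> nat \<Rightarrow> bool \<times> nat \<Rightarrow> nat" where
  "acene_vdist (s, i) (t, j) =
     (if s = t then (i - j) + (j - i)
      else if i = j \<and> odd i then 3 else Suc ((i - j) + (j - i)))"

lemma acene_vdist_sym: "acene_vdist u v = acene_vdist v u"
  by (cases u; cases v) auto

lemma acene_vdist_eq_0_iff: "acene_vdist u v = 0 \<longleftrightarrow> u = v"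
  by (cases u; cases v) auto

lemma row_edge_in_polyacene: "i < 2 * h \<Longrightarrow> {(t, i), (t, Suc i)} \<in> polyacene h"
  unfolding polyacene_def by (cases t) auto

lemma rung_in_polyacene: "k \<le> h \<Longrightarrow> {(t, 2 * k), (\<not> t, 2 * k)} \<in> polyacene h"
  unfolding polyacene_def by (cases t) (auto simp: insert_commute)

lemma polyacene_edgeE:
  assumes "e \<in> polyacene h"
  obtains (row) t i where "i < 2 * h" "e = {(t, i), (t, Suc i)}"
    | (rung) k where "k \<le> h" "e = {(True, 2 * k), (False, 2 * k)}"
  using assms unfolding polyacene_def by blast

lemma polyacene_vertex_le: "u \<in> \<Union>(polyacene h) \<Longrightarrow> snd u \<le> 2 * h"
  by (auto elim: polyacene_edgeE)

lemma acene_vdist_edge_le: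
  assumes "{v, w} \<in> polyacene h"
  shows "acene_vdist u w \<le> Suc (acene_vdist u v)"
  using assms
proof (cases rule: polyacene_edgeE)
  case (row t i)
  then have "v = (t, i) \<and> w = (t, Suc i) \<or> v = (t, Suc i) \<and> w = (t, i)"
    by (auto simp: doubleton_eq_iff)
  then show ?thesis by (cases u) auto
next
  case (rung k)
  then have "v = (True, 2 * k) \<and> w = (False, 2 * k) \<or> v = (False, 2 * k) \<and> w = (True, 2 * k)"
    by (auto simp: doubleton_eq_iff)
  then show ?thesis by (cases u) auto
qed

lemma acene_vdist_descent:
  assumes u: "snd u \<le> 2 * h" and v: "snd v \<le> 2 * h" and "u \<noteq> v"
  shows "\<exists>w. {v, w} \<in> polyacene h \<and> Suc (acene_vdist u w) = acene_vdist u v"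
proof -
  obtain s i t j where uv: "u = (s, i)" "v = (t, j)" by fastforce
  have step_left: ?thesis if "0 < j" and closer: "Suc (acene_vdist u (t, j - 1)) = acene_vdist u v"
  proof -
    have "{(t, j - 1), (t, Suc (j - 1))} \<in> polyacene h"
      using row_edge_in_polyacene[of "j - 1" h t] v uv that(1) by simp
    moreover have "{(t, j - 1), (t, Suc (j - 1))} = {v, (t, j - 1)}"
      using uv that(1) by auto
    ultimately show ?thesis using closer by (intro exI[of _ "(t, j - 1)"]) simp
  qed
  have step_right: ?thesis if "j < 2 * h" and closer: "Suc (acene_vdist u (t, Suc j)) = acene_vdist u v"
    using row_edge_in_polyacene[OF that(1), of t] closer uv by (intro exI[of _ "(t, Suc j)"]) simp
  show ?thesis
  proof (cases "s = t")
    case same: True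
    show ?thesis
    proof (cases "i < j")
      case True
      then show ?thesis using same uv by (intro step_left) auto
    next
      case False
      then have "j < i" using \<open>u \<noteq> v\<close> same uv by auto
      then show ?thesis using same u uv by (intro step_right) auto
    qed
  next
    case other: False
    show ?thesis
    proof (cases "even j")
      case True
      then obtain k where "j = 2 * k" by blast
      then have "{v, (\<not> t, j)} \<in> polyacene h" using rung_in_polyacene[of k h t] v uv by auto
      moreover have "Suc (acene_vdist u (\<not> t, j)) = acene_vdist u v"
        using other True uv by auto
      ultimately show ?thesis by blast
    next
      case odd: False
      show ?thesis
      proof (cases "i \<le> j")
        case True
        moreover have "0 < j" using odd by (simp add: odd_pos)
        ultimately show ?thesis using other odd uv by (intro step_left) auto
      next
        case False
        then show ?thesis using other odd u uv by (intro step_right) auto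
      qed
    qed
  qed
qed

interpretation acene: graph_metric "polyacene h" acene_vdist
proof
  show "\<exists>a b. a \<noteq> b \<and> e = {a, b}" if "e \<in> polyacene h" for e
    using that by (cases rule: polyacene_edgeE) (metis n_not_Suc_n prod.inject, metis prod.inject)
  show "acene_vdist u v = 0 \<longleftrightarrow> u = v" for u v
    by (rule acene_vdist_eq_0_iff)
  show "acene_vdist u w \<le> Suc (acene_vdist u v)" if "{v, w} \<in> polyacene h" for u v w
    using that by (rule acene_vdist_edge_le)
  show "\<exists>w. {v, w} \<in> polyacene h \<and> Suc (acene_vdist u w) = acene_vdist u v"
    if "u \<in> \<Union>(polyacene h)" "v \<in> \<Union>(polyacene h)" "u \<noteq> v" for u v
    using that by (intro acene_vdist_descent polyacene_vertex_le)
qed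

definition acene_row :: "bool \<Rightarrow> nat \<Rightarrow> (bool \<times> nat) set" where
  "acene_row t i = {(t, i), (t, Suc i)}"

definition acene_rung :: "nat \<Rightarrow> (bool \<times> nat) set" where
  "acene_rung k = {(True, 2 * k), (False, 2 * k)}"

definition acene_cell :: "nat \<Rightarrow> (bool \<times> nat) set set" where
  "acene_cell m = {acene_row True (2 * m), acene_row True (Suc (2 * m)),
     acene_row False (2 * m), acene_row False (Suc (2 * m)), acene_rung (Suc m)}"

lemma polyacene_0: "polyacene 0 = {acene_rung 0}"
  by (auto simp: polyacene_def acene_rung_def)

lemma polyacene_mono: "polyacene h \<subseteq> polyacene (Suc h)"
proof
  fix e assume "e \<in> polyacene h"
  then show "e \<in> polyacene (Suc h)"
  proof (cases rule: polyacene_edgeE)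
    case (row t i)
    then show ?thesis using row_edge_in_polyacene[of i "Suc h" t] by simp
  next
    case (rung k)
    then show ?thesis using rung_in_polyacene[of k "Suc h" True] by simp
  qed
qed

lemma polyacene_Suc: "polyacene (Suc h) = polyacene h \<union> acene_cell h"
proof
  show "polyacene (Suc h) \<subseteq> polyacene h \<union> acene_cell h"
  proof
    fix e assume "e \<in> polyacene (Suc h)"
    then show "e \<in> polyacene h \<union> acene_cell h"
    proof (cases rule: polyacene_edgeE)
      case (row t i)
      then consider "i < 2 * h" | "i = 2 * h" | "i = Suc (2 * h)" by fastforce
      then show ?thesis
        using row row_edge_in_polyacene[of i h t]
        by cases (cases t; simp add: acene_cell_def acene_row_def)+
    next
      case (rung k)
      then consider "k \<le> h" | "k = Suc h" by linarith
      then show ?thesis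
        using rung rung_in_polyacene[of k h True]
        by cases (simp_all add: acene_cell_def acene_rung_def)
    qed
  qed
  have "acene_cell h \<subseteq> polyacene (Suc h)"
    using row_edge_in_polyacene[of "2 * h" "Suc h"] row_edge_in_polyacene[of "Suc (2 * h)" "Suc h"]
      rung_in_polyacene[of "Suc h" "Suc h" True]
    by (simp add: acene_cell_def acene_row_def acene_rung_def)
  then show "polyacene h \<union> acene_cell h \<subseteq> polyacene (Suc h)"
    using polyacene_mono by blast
qed

lemma polyacene_cell_disjoint: "polyacene h \<inter> acene_cell h = {}"
proof -
  have "\<exists>u\<in>e. 2 * h < snd u" if "e \<in> acene_cell h" for e
    using that by (auto simp: acene_cell_def acene_row_def acene_rung_def)
  then show ?thesis using polyacene_vertex_le by fastforce
qed

lemma finite_polyacene: "finite (polyacene h)"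
  by (induction h) (simp_all add: polyacene_0 polyacene_Suc acene_cell_def)

lemma finite_acene_cell [simp]: "finite (acene_cell m)"
  by (simp add: acene_cell_def)

lemma sum_acene_cell:
  "sum g (acene_cell m) = g (acene_row True (2 * m)) + g (acene_row True (Suc (2 * m)))
     + g (acene_row False (2 * m)) + g (acene_row False (Suc (2 * m))) + g (acene_rung (Suc m))"
  by (simp add: acene_cell_def acene_row_def acene_rung_def doubleton_eq_iff add.assoc)

definition acene_dist_sum :: "(nat \<Rightarrow> real) \<Rightarrow> (bool \<times> nat) set set \<Rightarrow> (bool \<times> nat) set set \<Rightarrow> real"
  where "acene_dist_sum F A B = (\<Sum>e\<in>A. \<Sum>f\<in>B. F (line_dist acene_vdist e f))"

lemma acene_dist_sum_swap: "acene_dist_sum F A B = acene_dist_sum F B A"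
  unfolding acene_dist_sum_def
  by (subst sum.swap) (simp add: line_dist_sym[of acene_vdist, OF acene_vdist_sym])

lemma acene_dist_sum_union_left:
  "finite A \<Longrightarrow> finite B \<Longrightarrow> A \<inter> B = {} \<Longrightarrow>
   acene_dist_sum F (A \<union> B) C = acene_dist_sum F A C + acene_dist_sum F B C"
  unfolding acene_dist_sum_def by (rule sum.union_disjoint)

lemma acene_dist_sum_union_right:
  "finite B \<Longrightarrow> finite C \<Longrightarrow> B \<inter> C = {} \<Longrightarrow>
   acene_dist_sum F A (B \<union> C) = acene_dist_sum F A B + acene_dist_sum F A C"
  unfolding acene_dist_sum_def by (simp add: sum.union_disjoint sum.distrib)

lemma acene_dist_sum_polyacene_Suc:
  "acene_dist_sum F (polyacene (Suc h)) (polyacene (Suc h)) =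
     acene_dist_sum F (polyacene h) (polyacene h) + 2 * acene_dist_sum F (polyacene h) (acene_cell h)
   + acene_dist_sum F (acene_cell h) (acene_cell h)"
  using acene_dist_sum_swap[of F "acene_cell h" "polyacene h"]
  by (simp add: polyacene_Suc acene_dist_sum_union_left acene_dist_sum_union_right finite_polyacene
      polyacene_cell_disjoint)

lemma acene_dist_sum_polyacene_left:
  "acene_dist_sum F (polyacene h) B
     = acene_dist_sum F {acene_rung 0} B + (\<Sum>m<h. acene_dist_sum F (acene_cell m) B)"
  by (induction h)
    (simp_all add: polyacene_0 polyacene_Suc acene_dist_sum_union_left finite_polyacene
      polyacene_cell_disjoint)

lemma acene_dist_sum_polyacene_cell:
  assumes far: "\<And>m j. acene_dist_sum F (acene_cell m) (acene_cell (m + Suc j)) = c j"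
  shows "acene_dist_sum F (polyacene h) (acene_cell h)
           = acene_dist_sum F {acene_rung 0} (acene_cell h) + (\<Sum>j<h. c j)"
proof -
  have "(\<Sum>m<h. acene_dist_sum F (acene_cell m) (acene_cell h)) = (\<Sum>m<h. c (h - Suc m))"
  proof (rule sum.cong)
    fix m assume "m \<in> {..<h}"
    then have "h = m + Suc (h - Suc m)" by simp
    then show "acene_dist_sum F (acene_cell m) (acene_cell h) = c (h - Suc m)"
      using far by metis
  qed simp
  also have "\<dots> = (\<Sum>j<h. c j)"
    by (rule sum.nat_diff_reindex)
  finally show ?thesis by (simp add: acene_dist_sum_polyacene_left)
qed

lemma acene_cell_dist_sum_far:
  "acene_dist_sum real (acene_cell m) (acene_cell (m + Suc j)) = 50 * real (Suc j) + 13"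
  by (simp add: acene_dist_sum_def sum_acene_cell acene_row_def acene_rung_def line_dist_doubleton doubleton_eq_iff)

lemma acene_cell_dist_sum_self: "acene_dist_sum real (acene_cell m) (acene_cell m) = 36"
  by (simp add: acene_dist_sum_def sum_acene_cell acene_row_def acene_rung_def line_dist_doubleton doubleton_eq_iff)

lemma acene_rung_cell_dist_sum: "acene_dist_sum real {acene_rung 0} (acene_cell m) = 10 * real m + 9"
  by (simp add: acene_dist_sum_def sum_acene_cell acene_row_def acene_rung_def line_dist_doubleton doubleton_eq_iff)

lemma acene_cell_dist_sq_sum_far:
  "acene_dist_sum (\<lambda>n. real n ^ 2) (acene_cell m) (acene_cell (m + Suc j))
     = 100 * real (Suc j) ^ 2 + 52 * real (Suc j) + 29"
  by (simp add: acene_dist_sum_def sum_acene_cell acene_row_def acene_rung_def line_dist_doubleton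
      doubleton_eq_iff power2_eq_square algebra_simps)

lemma acene_cell_dist_sq_sum_self: "acene_dist_sum (\<lambda>n. real n ^ 2) (acene_cell m) (acene_cell m) = 76"
  by (simp add: acene_dist_sum_def sum_acene_cell acene_row_def acene_rung_def line_dist_doubleton doubleton_eq_iff)

lemma acene_rung_cell_dist_sq_sum:
  "acene_dist_sum (\<lambda>n. real n ^ 2) {acene_rung 0} (acene_cell m) = 20 * real m ^ 2 + 36 * real m + 19"
  by (simp add: acene_dist_sum_def sum_acene_cell acene_row_def acene_rung_def line_dist_doubleton
      doubleton_eq_iff power2_eq_square algebra_simps)

lemma acene_dist_sum_polyacene:
  "acene_dist_sum real (polyacene h) (polyacene h) = real h * (50 * real h ^ 2 + 69 * real h + 43) / 3"
proof (induction h)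
  case 0
  show ?case by (simp add: polyacene_0 acene_dist_sum_def)
next
  case (Suc h)
  have "(\<Sum>j<h. 50 * real (Suc j) + 13) = 25 * real h * (real h + 1) + 13 * real h"
    by (induction h) (simp_all add: algebra_simps)
  then show ?case
    unfolding acene_dist_sum_polyacene_Suc Suc.IH
        acene_dist_sum_polyacene_cell[OF acene_cell_dist_sum_far] acene_rung_cell_dist_sum
        acene_cell_dist_sum_self
    by (simp add: algebra_simps power2_eq_square power3_eq_cube add_divide_distrib)
qed

lemma acene_dist_sq_sum_polyacene:
  "acene_dist_sum (\<lambda>n. real n ^ 2) (polyacene h) (polyacene h)
     = real h * (50 * real h ^ 3 + 92 * real h ^ 2 + 85 * real h + 115) / 3"
proof (induction h)
  case 0
  show ?case by (simp add: polyacene_0 acene_dist_sum_def)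
next
  case (Suc h)
  have "(\<Sum>j<h. 100 * real (Suc j) ^ 2 + 52 * real (Suc j) + 29)
      = 100 * real h * (real h + 1) * (2 * real h + 1) / 6 + 26 * real h * (real h + 1) + 29 * real h"
    by (induction h) (simp_all add: algebra_simps power2_eq_square add_divide_distrib)
  then show ?case
    unfolding acene_dist_sum_polyacene_Suc Suc.IH
        acene_dist_sum_polyacene_cell[OF acene_cell_dist_sq_sum_far] acene_rung_cell_dist_sq_sum
        acene_cell_dist_sq_sum_self
    by (simp add: algebra_simps power2_eq_square power3_eq_cube power4_eq_xxxx
        add_divide_distrib)
qed

theorem mainTheorem5:
  fixes h :: nat
  assumes "h \<ge> 1"
  shows "edge_wiener (polyacene h) = real h * (50 * real h ^ 2 + 69 * real h + 43) / 6
       \<and> edge_hyper_wiener (polyacene h)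
           = real h * (25 * real h ^ 3 + 71 * real h ^ 2 + 77 * real h + 79) / 6"
proof -
  let ?pairs = "{(e, f). e \<in> polyacene h \<and> f \<in> polyacene h \<and> e \<noteq> f}"
  have offdiag: "(\<Sum>(e, f) \<in> ?pairs. F (edist (polyacene h) e f))
      = acene_dist_sum F (polyacene h) (polyacene h)" if "F 0 = 0" for F
    using acene.sum_offdiag_edist[where F = F, OF finite_polyacene[of h] that]
    by (simp add: acene_dist_sum_def)
  have "(\<Sum>(e, f) \<in> ?pairs. real (edist (polyacene h) e f))
      = real h * (50 * real h ^ 2 + 69 * real h + 43) / 3"
    using offdiag[of real] acene_dist_sum_polyacene by simp
  moreover have "(\<Sum>(e, f) \<in> ?pairs. real (edist (polyacene h) e f) ^ 2)
      = real h * (50 * real h ^ 3 + 92 * real h ^ 2 + 85 * real h + 115) / 3"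
    using offdiag[of "\<lambda>n. real n ^ 2"] acene_dist_sq_sum_polyacene by simp
  ultimately show ?thesis
    unfolding edge_wiener_def edge_hyper_wiener_def by (simp add: algebra_simps add_divide_distrib)
qed

end
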